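(* Let $H$ be a real Hilbert space, $A:H\to c_0$ bounded linear with adjoint $A^*:\ell^1\to H$ (identifying $c_0^*=\ell^1$), with $A$ and $A^*$ injective. Let $(H_n)_{n\in\mathbb N}$ be subspaces of $H$ with $\dim H_n=n$ whose orthogonal projections $P_n$ satisfy $P_nv\to v$ for all $v\in H$. Let $f\in H$, $u^\dagger\in\ell^1$ with $A^*u^\dagger=f$, and suppose there is $v^\dagger\in H$ with $\|Av^\dagger\|_\infty\le1$, $(Av^\dagger)_i=\operatorname{sign}(u^\dagger_i)$ whenever $u^\dagger_i\ne0$, and $|(Av^\dagger)_i|=1$ if and only if $i\in\operatorname{supp}u^\dagger$. Then there is $n_0\in\mathbb N$ such that for all $n\ge n_0$: (i) $u^\dagger$ is the unique solution of $\min\{\|u\|_1: u\in\ell^1,\ P_nA^*u=P_nf\}$; (ii) there is $v^{\dagger,n}\in H_n$ with $\|Av^{\dagger,n}\|_\infty\le1$, $|(Av^{\dagger,n})_i|=1$ if and only if $i\in\operatorname{supp}u^\dagger$, and $\varepsilon_{v^{\dagger,n}}\ge\frac12\varepsilon_{v^\dagger}$.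
   Context: $A^*$ is defined by $\langle A^*u,z\rangle=\sum_iu_i(Az)_i$. $\operatorname{supp}u=\{i:u_i\ne0\}$. For $v\in H$, $\varepsilon_v=1-\max_{i\notin\operatorname{supp}u^\dagger}|(Av)_i|$. *)

theory Defs
  imports "HOL-Analysis.Analysis"
begin

definition c0 :: "(nat \<Rightarrow> real) set" where
  "c0 = {x. x \<longlonglongrightarrow> 0}"

definition l1 :: "(nat \<Rightarrow> real) set" where
  "l1 = {u. summable (\<lambda>i. \<bar>u i\<bar>)}"

definition norm1 :: "(nat \<Rightarrow> real) \<Rightarrow> real" where
  "norm1 u = (\<Sum>i. \<bar>u i\<bar>)"

definition supp :: "(nat \<Rightarrow> real) \<Rightarrow> nat set" where
  "supp u = {i. u i \<noteq> 0}"

definition orth_proj :: "'a::real_inner set \<Rightarrow> 'a \<Rightarrow> 'a" where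
  "orth_proj S v = (THE p. p \<in> S \<and> (\<forall>w\<in>S. inner (v - p) w = 0))"

definition bounded_linear_c0 :: "('a::real_normed_vector \<Rightarrow> (nat \<Rightarrow> real)) \<Rightarrow> bool" where
  "bounded_linear_c0 A \<longleftrightarrow> (\<forall>i. linear (\<lambda>v. A v i)) \<and> (\<forall>v. A v \<in> c0) \<and>
     (\<exists>C. \<forall>v i. \<bar>A v i\<bar> \<le> C * norm v)"

definition is_adjoint :: "('a::real_inner \<Rightarrow> (nat \<Rightarrow> real)) \<Rightarrow> ((nat \<Rightarrow> real) \<Rightarrow> 'a) \<Rightarrow> bool" where
  "is_adjoint A As \<longleftrightarrow> (\<forall>u\<in>l1. \<forall>z. inner (As u) z = (\<Sum>i. u i * A z i))"

text \<open>epsilon_v = 1 - max over i not in supp u of |(Av)_i|; the maximum is taken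
  as a supremum including 0 (equal to the max whenever the index set is nonempty,
  since |(Av)_i| >= 0; equals 0 if the complement of the support is empty).\<close>
definition eps :: "('a \<Rightarrow> (nat \<Rightarrow> real)) \<Rightarrow> (nat \<Rightarrow> real) \<Rightarrow> 'a \<Rightarrow> real" where
  "eps A u v = 1 - Sup (insert 0 ((\<lambda>i. \<bar>A v i\<bar>) ` (- supp u)))"

definition is_l1_min :: "((nat \<Rightarrow> real) \<Rightarrow> bool) \<Rightarrow> (nat \<Rightarrow> real) \<Rightarrow> bool" where
  "is_l1_min feas u \<longleftrightarrow> u \<in> l1 \<and> feas u \<and> (\<forall>w\<in>l1. feas w \<longrightarrow> norm1 u \<le> norm1 w)"

end

theory Submission
  imports Defs
begin

(*
  The vectors a_i = A^* e_i are linearly independent, and A v^dagger lies in c_0, so the support S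
  of u^dagger is finite and |(A v^dagger)_i| <= 1 - eps off S for some eps > 0. Adding the a_i,
  i in S, one at a time (approximate the new a_m inside H_n and remove its components along the
  vectors already built), one obtains c_{n,j} in H_n with (A c_{n,j})_i = delta_ij on S that converge
  as n -> infinity. Correcting P_n v^dagger by a combination of the c_{n,j} gives v_n in H_n with
  A v_n = A v^dagger on S and v_n -> v^dagger; as A is bounded into c_0, eventually
  |(A v_n)_i| <= 1 - eps/2 off S. Then v_n is a dual certificate for the projected problem: it shows
  that u^dagger is a minimiser and forces every minimiser to be supported in S, where the c_{n,j}
  pin its coordinates down.
*)

section \<open>Orthogonal projections onto finite-dimensional subspaces\<close>

lemma orthogonal_projection_exists_span:
  fixes B :: "'a::real_inner set"
  assumes "finite B"
  obtains p where "p \<in> span B" "\<And>w. w \<in> span B \<Longrightarrow> inner (v - p) w = 0"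
proof -
  obtain C where "finite C" "span C = span B" and orth: "pairwise orthogonal C"
    using basis_orthogonal[OF assms] by blast
  define p where "p = (\<Sum>b\<in>C. (inner b v / inner b b) *\<^sub>R b)"
  have "inner (v - p) c = 0" if "c \<in> C" for c
  proof -
    have "inner p c = (\<Sum>b\<in>C. (inner b v / inner b b) * inner b c)"
      unfolding p_def by (simp add: inner_sum_left)
    also have "\<dots> = (inner c v / inner c c) * inner c c"
      using orth that \<open>finite C\<close>
      by (subst sum.remove[of _ c]) (auto simp: pairwise_def orthogonal_def intro!: sum.neutral)
    also have "\<dots> = inner v c"
      by (cases "c = 0") (simp_all add: inner_commute)
    finally show ?thesis by (simp add: inner_diff_left)
  qed
  then have "inner (v - p) w = 0" if "w \<in> span C" for w
    using orthogonal_to_span[OF that] by (simp add: orthogonal_def)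
  moreover have "p \<in> span C"
    unfolding p_def by (intro span_sum span_scale span_base)
  ultimately show thesis using that \<open>span C = span B\<close> by auto
qed

(* dim S = 0 also holds for infinite-dimensional S, so 0 < dim S is what makes S finite-dimensional. *)
lemma orth_proj_finite_dim:
  fixes S :: "'a::real_inner set"
  assumes "subspace S" and "0 < dim S"
  shows "orth_proj S v \<in> S" and "\<And>w. w \<in> S \<Longrightarrow> inner (v - orth_proj S v) w = 0"
proof -
  obtain B where "B \<subseteq> S" "independent B" "S \<subseteq> span B" "card B = dim S"
    by (rule basis_exists)
  then have "finite B"
    using assms(2) card.infinite by force
  have "S = span B"
    using \<open>B \<subseteq> S\<close> \<open>S \<subseteq> span B\<close> span_minimal[OF _ assms(1)] by blast
  obtain p where p: "p \<in> S" "\<And>w. w \<in> S \<Longrightarrow> inner (v - p) w = 0"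
    using orthogonal_projection_exists_span[OF \<open>finite B\<close>] \<open>S = span B\<close> by blast
  have "\<exists>!p. p \<in> S \<and> (\<forall>w\<in>S. inner (v - p) w = 0)"
  proof (rule ex1I)
    show "p \<in> S \<and> (\<forall>w\<in>S. inner (v - p) w = 0)" using p by blast
  next
    fix q assume q: "q \<in> S \<and> (\<forall>w\<in>S. inner (v - q) w = 0)"
    have "q - p \<in> S" using p q \<open>subspace S\<close> by (simp add: subspace_diff)
    then have "inner (q - p) (q - p) = inner (v - p) (q - p) - inner (v - q) (q - p)"
      by (simp add: inner_diff_left)
    also have "\<dots> = 0" using p q \<open>q - p \<in> S\<close> by simp
    finally show "q = p" by simp
  qed
  then have "orth_proj S v \<in> S \<and> (\<forall>w\<in>S. inner (v - orth_proj S v) w = 0)"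
    unfolding orth_proj_def by (rule theI')
  then show "orth_proj S v \<in> S" and "\<And>w. w \<in> S \<Longrightarrow> inner (v - orth_proj S v) w = 0"
    by auto
qed

lemma orth_proj_eq_iff:
  fixes S :: "'a::real_inner set"
  assumes "subspace S" and "0 < dim S"
  shows "orth_proj S x = orth_proj S y \<longleftrightarrow> (\<forall>w\<in>S. inner x w = inner y w)"
proof
  assume "orth_proj S x = orth_proj S y"
  then show "\<forall>w\<in>S. inner x w = inner y w"
    using orth_proj_finite_dim(2)[OF assms, of _ x] orth_proj_finite_dim(2)[OF assms, of _ y]
    by (simp add: inner_diff_left)
next
  assume xy: "\<forall>w\<in>S. inner x w = inner y w"
  let ?d = "orth_proj S x - orth_proj S y"
  have "?d \<in> S"
    using orth_proj_finite_dim(1)[OF assms] \<open>subspace S\<close> by (simp add: subspace_diff)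
  then have "inner ?d ?d = inner (y - orth_proj S y) ?d - inner (x - orth_proj S x) ?d"
    using xy by (simp add: inner_diff_left)
  also have "\<dots> = 0" using orth_proj_finite_dim(2)[OF assms] \<open>?d \<in> S\<close> by simp
  finally show "orth_proj S x = orth_proj S y" by simp
qed

section \<open>Sequence spaces\<close>

lemma l1_finite_support:
  assumes "finite T" and "\<And>k. k \<notin> T \<Longrightarrow> u k = 0"
  shows "u \<in> l1"
  unfolding l1_def using assms by (auto intro: summable_finite)

lemma c0_finite_abs_ge:
  fixes x :: "nat \<Rightarrow> real"
  assumes "x \<longlonglongrightarrow> 0" and "0 < r"
  shows "finite {i. r \<le> \<bar>x i\<bar>}"
proof -
  have "\<forall>\<^sub>F i in sequentially. dist (x i) 0 < r"
    using assms by (rule tendstoD)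
  then show ?thesis
    by (simp add: cofinite_eq_sequentially[symmetric] eventually_cofinite dist_real_def not_less)
qed

lemma c0_abs_bounded_away_from_one:
  fixes x :: "nat \<Rightarrow> real"
  assumes "x \<longlonglongrightarrow> 0" and "\<And>i. \<bar>x i\<bar> \<le> 1"
  obtains M where "0 \<le> M" "M < 1" "\<And>i. \<bar>x i\<bar> \<noteq> 1 \<Longrightarrow> \<bar>x i\<bar> \<le> M"
proof -
  have "finite {i. 1 / 2 \<le> \<bar>x i\<bar>}"
    using assms(1) by (rule c0_finite_abs_ge) simp
  then have "finite {i. 1 / 2 \<le> \<bar>x i\<bar> \<and> \<bar>x i\<bar> \<noteq> 1}"
    by (rule finite_subset[rotated]) auto
  then have fin: "finite (insert (1 / 2) ((\<lambda>i. \<bar>x i\<bar>) ` {i. 1 / 2 \<le> \<bar>x i\<bar> \<and> \<bar>x i\<bar> \<noteq> 1}))"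
    by simp
  define M where "M = Max (insert (1 / 2) ((\<lambda>i. \<bar>x i\<bar>) ` {i. 1 / 2 \<le> \<bar>x i\<bar> \<and> \<bar>x i\<bar> \<noteq> 1}))"
  show thesis
  proof
    show "0 \<le> M"
      unfolding M_def using fin by (auto simp: Max_ge_iff)
    show "M < 1"
      unfolding M_def using fin assms(2) by (subst Max_less_iff) (auto simp: less_le)
    show "\<bar>x i\<bar> \<le> M" if "\<bar>x i\<bar> \<noteq> 1" for i
      unfolding M_def using fin that by (cases "1 / 2 \<le> \<bar>x i\<bar>") (auto simp: Max_ge_iff)
  qed
qed

lemma suminf_mult_le_norm1:
  assumes "w \<in> l1" and "\<And>k. \<bar>x k\<bar> \<le> 1"
  shows "summable (\<lambda>k. w k * x k)" and "(\<Sum>k. w k * x k) \<le> norm1 w"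
proof -
  have sw: "summable (\<lambda>k. \<bar>w k\<bar>)" using assms(1) unfolding l1_def by simp
  have le: "\<bar>w k * x k\<bar> \<le> \<bar>w k\<bar>" for k
    using mult_left_mono[OF assms(2), of "\<bar>w k\<bar>" k] by (simp add: abs_mult)
  show sm: "summable (\<lambda>k. w k * x k)"
    using le by (intro summable_comparison_test[OF _ sw]) (simp add: real_norm_def)
  show "(\<Sum>k. w k * x k) \<le> norm1 w"
    unfolding norm1_def using sm sw le by (intro suminf_le) (auto simp: abs_le_iff)
qed

lemma suminf_mult_eq_norm1_imp_zero:
  assumes "w \<in> l1" and "\<And>k. \<bar>x k\<bar> \<le> 1" and "(\<Sum>k. w k * x k) = norm1 w" and "\<bar>x i\<bar> < 1"
  shows "w i = 0"
proof (rule ccontr)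
  assume "w i \<noteq> 0"
  have sw: "summable (\<lambda>k. \<bar>w k\<bar>)" using assms(1) unfolding l1_def by simp
  have gap: "0 \<le> \<bar>w k\<bar> - w k * x k" for k
    using mult_left_mono[OF assms(2), of "\<bar>w k\<bar>" k] abs_ge_self[of "w k * x k"]
    by (simp add: abs_mult)
  have sx: "summable (\<lambda>k. w k * x k)"
    using assms(1,2) by (rule suminf_mult_le_norm1(1))
  have sd: "summable (\<lambda>k. \<bar>w k\<bar> - w k * x k)"
    using sw sx by (rule summable_diff)
  have "(\<Sum>k. \<bar>w k\<bar> - w k * x k) = 0"
    using suminf_diff[OF sw sx] assms(3)
    unfolding norm1_def by linarith
  then have "\<bar>w i\<bar> - w i * x i = 0"
    using suminf_eq_zero_iff[OF sd gap] by blast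
  moreover have "w i * x i < \<bar>w i\<bar>"
  proof -
    have "\<bar>w i\<bar> * \<bar>x i\<bar> < \<bar>w i\<bar> * 1"
      using \<open>w i \<noteq> 0\<close> by (intro mult_strict_left_mono[OF assms(4)]) simp
    then show ?thesis using abs_ge_self[of "w i * x i"] by (simp add: abs_mult)
  qed
  ultimately show False by simp
qed

lemma suminf_mult_sgn_eq_norm1:
  assumes "\<And>k. w k \<noteq> 0 \<Longrightarrow> x k = sgn (w k)"
  shows "(\<Sum>k. w k * x k) = norm1 w"
proof -
  have "w k * x k = \<bar>w k\<bar>" for k
    using assms[of k] by (cases "w k = 0") (auto simp: sgn_if)
  then show ?thesis unfolding norm1_def by simp
qed

lemma suminf_mult_eq_coordinate:
  fixes u x :: "nat \<Rightarrow> real"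
  assumes "j \<in> S" and "\<And>k. k \<notin> S \<Longrightarrow> u k = 0" and "\<And>k. k \<in> S \<Longrightarrow> x k = (if k = j then 1 else 0)"
  shows "(\<Sum>k. u k * x k) = u j"
proof -
  have "u k * x k = (if k = j then u j else 0)" for k
    using assms by (cases "k \<in> S") auto
  then show ?thesis
    using sums_unique[OF sums_single[of j "\<lambda>_. u j"]] by simp
qed

lemma eps_ge:
  assumes "0 \<le> B" and "\<And>i. i \<notin> supp u \<Longrightarrow> \<bar>A v i\<bar> \<le> B"
  shows "1 - B \<le> eps A u v"
  unfolding eps_def using assms by (auto intro!: cSup_least)

lemma
  assumes "\<And>i. \<bar>A v i\<bar> \<le> 1"
  shows abs_le_one_minus_eps: "i \<notin> supp u \<Longrightarrow> \<bar>A v i\<bar> \<le> 1 - eps A u v"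
    and eps_le_one: "eps A u v \<le> 1"
proof -
  have "bdd_above (insert 0 ((\<lambda>i. \<bar>A v i\<bar>) ` (- supp u)))"
    using assms(1) by (auto intro: bdd_aboveI[of _ 1])
  then show "i \<notin> supp u \<Longrightarrow> \<bar>A v i\<bar> \<le> 1 - eps A u v" and "eps A u v \<le> 1"
    unfolding eps_def by (simp_all add: cSup_upper)
qed

lemma eps_pos:
  assumes "A v \<longlonglongrightarrow> 0" and "\<And>i. \<bar>A v i\<bar> \<le> 1" and "\<And>i. \<bar>A v i\<bar> = 1 \<longleftrightarrow> i \<in> supp u"
  shows "0 < eps A u v"
proof -
  obtain M where "0 \<le> M" "M < 1" "\<And>i. \<bar>A v i\<bar> \<noteq> 1 \<Longrightarrow> \<bar>A v i\<bar> \<le> M"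
    using c0_abs_bounded_away_from_one[OF assms(1,2)] by blast
  then have "1 - M \<le> eps A u v"
    using assms(3) by (intro eps_ge) auto
  then show ?thesis using \<open>M < 1\<close> by simp
qed

lemma eps_perturbation:
  assumes vd: "\<And>i. \<bar>A vd i\<bar> \<le> 1" "\<And>i. \<bar>A vd i\<bar> = 1 \<longleftrightarrow> i \<in> supp u"
    and same: "\<And>i. i \<in> supp u \<Longrightarrow> A v i = A vd i"
    and close: "\<And>i. \<bar>A v i - A vd i\<bar> \<le> eps A u vd / 2"
    and pos: "0 < eps A u vd"
  shows "\<And>i. i \<notin> supp u \<Longrightarrow> \<bar>A v i\<bar> < 1" and "\<And>i. \<bar>A v i\<bar> \<le> 1"
    and "\<And>i. \<bar>A v i\<bar> = 1 \<longleftrightarrow> i \<in> supp u" and "eps A u vd / 2 \<le> eps A u v"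
proof -
  have off: "\<bar>A v i\<bar> \<le> 1 - eps A u vd / 2" if "i \<notin> supp u" for i
    using abs_le_one_minus_eps[of A vd, OF vd(1) that] close[of i] by linarith
  then show "\<And>i. i \<notin> supp u \<Longrightarrow> \<bar>A v i\<bar> < 1"
    using pos by fastforce
  then show "\<And>i. \<bar>A v i\<bar> \<le> 1" and "\<And>i. \<bar>A v i\<bar> = 1 \<longleftrightarrow> i \<in> supp u"
    using same vd by (metis less_irrefl order.order_iff_strict)+
  have "eps A u vd \<le> 1"
    by (rule eps_le_one[of A vd, OF vd(1)])
  then show "eps A u vd / 2 \<le> eps A u v"
    using eps_ge[of "1 - eps A u vd / 2" u A v] off by simp
qed

section \<open>The adjoint on finitely supported sequences\<close>

lemma span_image_eq_sum:
  fixes a :: "'i \<Rightarrow> 'a::real_vector"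
  assumes "finite T" and "x \<in> span (a ` T)"
  obtains c where "x = (\<Sum>i\<in>T. c i *\<^sub>R a i)"
proof -
  from assms(2) have "\<exists>c. x = (\<Sum>i\<in>T. c i *\<^sub>R a i)"
  proof (induction rule: span_induct_alt)
    case base
    show ?case by (rule exI[of _ "\<lambda>_. 0"]) simp
  next
    case (step r y x)
    then obtain i c where "i \<in> T" "y = a i" "x = (\<Sum>i\<in>T. c i *\<^sub>R a i)" by blast
    moreover have "(if k = i then r else 0) *\<^sub>R a k = (if k = i then r *\<^sub>R a k else 0)" for k
      by simp
    ultimately have "r *\<^sub>R y + x = (\<Sum>k\<in>T. (c k + (if k = i then r else 0)) *\<^sub>R a k)"
      using \<open>finite T\<close> by (simp add: scaleR_add_left sum.distrib)
    then show ?case by (rule exI[where x = "\<lambda>k. c k + (if k = i then r else 0)"])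
  qed
  then show thesis using that by blast
qed

definition unit_seq :: "nat \<Rightarrow> nat \<Rightarrow> real" where
  "unit_seq i k = (if k = i then 1 else 0)"

lemma unit_seq_in_l1: "unit_seq i \<in> l1"
  by (rule l1_finite_support[of "{i}"]) (auto simp: unit_seq_def)

lemma adjoint_unit_seq:
  assumes "is_adjoint A As"
  shows "A z i = inner (As (unit_seq i)) z"
proof -
  have "inner (As (unit_seq i)) z = (\<Sum>k. unit_seq i k * A z k)"
    using assms unit_seq_in_l1 unfolding is_adjoint_def by blast
  also have "\<dots> = (\<Sum>k. if k = i then A z k else 0)"
    by (rule arg_cong[where f = suminf]) (simp add: unit_seq_def fun_eq_iff)
  also have "\<dots> = A z i"
    using sums_unique[OF sums_single[of i "\<lambda>k. A z k"]] by simp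
  finally show ?thesis by simp
qed

lemma adjoint_finite_support:
  assumes "is_adjoint A As" and "finite T" and "\<And>k. k \<notin> T \<Longrightarrow> u k = 0"
  shows "As u = (\<Sum>k\<in>T. u k *\<^sub>R As (unit_seq k))"
proof (rule vector_eq_rdot[THEN iffD1], intro allI)
  fix z
  have "inner (As u) z = (\<Sum>k. u k * A z k)"
    using assms l1_finite_support unfolding is_adjoint_def by blast
  also have "\<dots> = (\<Sum>k\<in>T. u k * A z k)"
    using assms(2,3) by (intro suminf_finite) auto
  also have "\<dots> = inner (\<Sum>k\<in>T. u k *\<^sub>R As (unit_seq k)) z"
    by (simp add: inner_sum_left adjoint_unit_seq[OF assms(1)])
  finally show "inner (As u) z = inner (\<Sum>k\<in>T. u k *\<^sub>R As (unit_seq k)) z" .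
qed

lemma adjoint_unit_seq_not_in_span:
  assumes "is_adjoint A As" and "inj_on As l1" and "finite T"
  shows "As (unit_seq m) \<notin> span ((\<lambda>k. As (unit_seq k)) ` (T - {m}))"
proof
  assume "As (unit_seq m) \<in> span ((\<lambda>k. As (unit_seq k)) ` (T - {m}))"
  then obtain c where c: "As (unit_seq m) = (\<Sum>k\<in>T - {m}. c k *\<^sub>R As (unit_seq k))"
    using span_image_eq_sum[of "T - {m}"] \<open>finite T\<close> by blast
  define u where "u k = (if k \<in> T - {m} then c k else 0)" for k
  have "As u = (\<Sum>k\<in>T - {m}. u k *\<^sub>R As (unit_seq k))"
    by (rule adjoint_finite_support[OF assms(1)]) (auto simp: u_def assms(3))
  also have "\<dots> = As (unit_seq m)"
    unfolding c by (intro sum.cong) (auto simp: u_def)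
  finally have "As u = As (unit_seq m)" .
  moreover have "u \<in> l1"
    by (rule l1_finite_support[of "T - {m}"]) (auto simp: u_def assms(3))
  ultimately have "u = unit_seq m"
    using assms(2) unit_seq_in_l1 unfolding inj_on_def by blast
  then have "u m = unit_seq m m" by simp
  then show False by (simp add: u_def unit_seq_def)
qed

lemma bounded_linear_c0_uniform_tendsto:
  assumes "bounded_linear_c0 A" and "y \<longlonglongrightarrow> x" and "0 < e"
  shows "\<forall>\<^sub>F n in sequentially. \<forall>i. \<bar>A (y n) i - A x i\<bar> \<le> e"
proof -
  obtain C where C: "\<And>v i. \<bar>A v i\<bar> \<le> C * norm v" and lin: "\<And>i. linear (\<lambda>v. A v i)"
    using assms(1) unfolding bounded_linear_c0_def by blast
  define K where "K = \<bar>C\<bar> + 1"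
  have "\<forall>\<^sub>F n in sequentially. norm (y n - x) < e / K"
    using assms(2,3) unfolding K_def by (simp add: LIMSEQ_iff_nz tendsto_iff dist_norm)
  then show ?thesis
  proof eventually_elim
    case (elim n)
    show ?case
    proof
      fix i
      have "\<bar>A (y n) i - A x i\<bar> = \<bar>A (y n - x) i\<bar>"
        using linear_diff[OF lin[of i]] by simp
      also have "\<dots> \<le> K * norm (y n - x)"
        using C[of "y n - x" i] unfolding K_def
        by (smt (verit) mult_right_mono norm_ge_zero)
      also have "\<dots> \<le> e"
        using elim unfolding K_def by (simp add: field_simps)
      finally show "\<bar>A (y n) i - A x i\<bar> \<le> e" .
    qed
  qed
qed

section \<open>Convergent biorthogonal systems\<close>

definition biorthogonal_in :: "('i \<Rightarrow> 'a::real_inner) \<Rightarrow> 'i set \<Rightarrow> 'a set \<Rightarrow> ('i \<Rightarrow> 'a) \<Rightarrow> bool" where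
  "biorthogonal_in a S V c \<longleftrightarrow>
     (\<forall>j\<in>S. c j \<in> V \<and> (\<forall>i\<in>S. inner (a i) (c j) = (if i = j then 1 else 0)))"

lemma inner_sum_biorthogonal:
  assumes "finite S" and "i \<in> S" and "biorthogonal_in a S V c"
  shows "inner (a i) (\<Sum>j\<in>S. t j *\<^sub>R c j) = t i"
proof -
  have "inner (a i) (\<Sum>j\<in>S. t j *\<^sub>R c j) = (\<Sum>j\<in>S. if i = j then t j else 0)"
    using assms(2,3) unfolding biorthogonal_in_def by (auto simp: inner_sum_right intro!: sum.cong)
  also have "\<dots> = t i" using assms(1,2) by simp
  finally show ?thesis .
qed

lemma biorthogonal_limit:
  assumes "\<forall>\<^sub>F n in sequentially. biorthogonal_in a S (V n) (c n)"
    and "\<And>j. j \<in> S \<Longrightarrow> (\<lambda>n. c n j) \<longlonglongrightarrow> b j"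
  shows "biorthogonal_in a S UNIV b"
  unfolding biorthogonal_in_def
proof (intro ballI conjI)
  fix i j assume "j \<in> S" "i \<in> S"
  have "\<forall>\<^sub>F n in sequentially. inner (a i) (c n j) = (if i = j then 1 else 0)"
    using assms(1) \<open>i \<in> S\<close> \<open>j \<in> S\<close> by (auto simp: biorthogonal_in_def elim: eventually_mono)
  then have "(\<lambda>n. inner (a i) (c n j)) \<longlonglongrightarrow> (if i = j then 1 else 0)"
    by (rule tendsto_eventually)
  moreover have "(\<lambda>n. inner (a i) (c n j)) \<longlonglongrightarrow> inner (a i) (b j)"
    using assms(2)[OF \<open>j \<in> S\<close>] by (intro tendsto_intros)
  ultimately show "inner (a i) (b j) = (if i = j then 1 else 0)"
    using LIMSEQ_unique by blast
qed simp

lemma inner_remainder_pos: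
  fixes x y :: "'a::real_inner"
  assumes "y \<in> span T" and "x \<notin> span T" and "\<And>t. t \<in> T \<Longrightarrow> inner t (x - y) = 0"
  shows "0 < inner x (x - y)"
proof -
  have "inner y (x - y) = 0"
    using orthogonal_to_span[OF assms(1), of "x - y"] assms(3)
    by (auto simp: orthogonal_def inner_commute)
  moreover have "x - y \<noteq> 0"
    using assms(1,2) by auto
  moreover have "inner x (x - y) = inner (x - y) (x - y) + inner y (x - y)"
    by (simp add: inner_diff_left)
  ultimately show ?thesis by simp
qed

lemma exists_biorthogonal_extension:
  fixes a :: "'i \<Rightarrow> 'a::real_inner"
  assumes "finite S" and sub: "\<And>n. subspace (H n)"
    and approx: "\<And>x. \<exists>y. (\<forall>\<^sub>F n in sequentially. y n \<in> H n) \<and> y \<longlonglongrightarrow> x"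
    and am: "a m \<notin> span (a ` S)"
    and b: "\<And>j. j \<in> S \<Longrightarrow> b j \<in> span (a ` S)" "\<And>j. j \<in> S \<Longrightarrow> (\<lambda>n. c n j) \<longlonglongrightarrow> b j"
    and c: "\<forall>\<^sub>F n in sequentially. biorthogonal_in a S (H n) (c n)"
  obtains e el where "el \<in> span (a ` insert m S)" and "e \<longlonglongrightarrow> el"
    and "\<forall>\<^sub>F n in sequentially. e n \<in> H n \<and> inner (a m) (e n) = 1 \<and> (\<forall>i\<in>S. inner (a i) (e n) = 0)"
proof -
  obtain x where xH: "\<forall>\<^sub>F n in sequentially. x n \<in> H n" and x: "x \<longlonglongrightarrow> a m"
    using approx by blast
  \<comment> \<open>Normalising g n gives the new dual vector; its limit a m - y is nonzero since a m \<notin> span (a ` S).\<close>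
  define g where "g n = x n - (\<Sum>j\<in>S. inner (a j) (x n) *\<^sub>R c n j)" for n
  define y where "y = (\<Sum>j\<in>S. inner (a j) (a m) *\<^sub>R b j)"
  have g: "g \<longlonglongrightarrow> a m - y"
    unfolding g_def y_def by (intro tendsto_intros x) (use b(2) in auto)
  have "y \<in> span (a ` S)"
    unfolding y_def using b(1) by (intro span_sum span_scale) auto
  have "inner (a i) (a m - y) = 0" if "i \<in> S" for i
    using inner_sum_biorthogonal[OF \<open>finite S\<close> that biorthogonal_limit[OF c b(2)]]
    by (simp add: y_def inner_diff_right)
  then have \<gamma>: "inner (a m) (a m - y) > 0"
    using inner_remainder_pos[OF \<open>y \<in> span (a ` S)\<close> am] by blast
  have g_am: "(\<lambda>n. inner (a m) (g n)) \<longlonglongrightarrow> inner (a m) (a m - y)"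
    using g by (intro tendsto_intros)
  have g_ne: "\<forall>\<^sub>F n in sequentially. inner (a m) (g n) \<noteq> 0"
    by (rule tendsto_imp_eventually_ne[OF g_am]) (use \<gamma> in simp)
  define e where "e n = (1 / inner (a m) (g n)) *\<^sub>R g n" for n
  show thesis
  proof
    have "a m \<in> span (a ` insert m S)"
      by (auto intro: span_base)
    moreover have "span (a ` S) \<subseteq> span (a ` insert m S)"
      by (rule span_mono) auto
    ultimately show "(1 / inner (a m) (a m - y)) *\<^sub>R (a m - y) \<in> span (a ` insert m S)"
      using \<open>y \<in> span (a ` S)\<close> by (intro span_scale span_diff) auto
    show "e \<longlonglongrightarrow> (1 / inner (a m) (a m - y)) *\<^sub>R (a m - y)"
      unfolding e_def using \<gamma> by (intro tendsto_intros g g_am) auto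
    show "\<forall>\<^sub>F n in sequentially. e n \<in> H n \<and> inner (a m) (e n) = 1 \<and> (\<forall>i\<in>S. inner (a i) (e n) = 0)"
      using xH c g_ne
    proof eventually_elim
      case (elim n)
      then have "g n \<in> H n"
        unfolding g_def biorthogonal_in_def using sub
        by (intro subspace_diff subspace_sum subspace_scale) auto
      moreover have "inner (a i) (g n) = 0" if "i \<in> S" for i
        using inner_sum_biorthogonal[OF \<open>finite S\<close> that \<open>biorthogonal_in a S (H n) (c n)\<close>]
        by (simp add: g_def inner_diff_right)
      ultimately show ?case
        using elim(3) sub unfolding e_def by (simp add: subspace_scale)
    qed
  qed
qed

lemma exists_biorthogonal_approximations:
  fixes a :: "'i \<Rightarrow> 'a::real_inner"
  assumes "finite S" and sub: "\<And>n. subspace (H n)"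
    and approx: "\<And>x. \<exists>y. (\<forall>\<^sub>F n in sequentially. y n \<in> H n) \<and> y \<longlonglongrightarrow> x"
    and "\<And>m. m \<in> S \<Longrightarrow> a m \<notin> span (a ` (S - {m}))"
  shows "\<exists>c b. (\<forall>j\<in>S. b j \<in> span (a ` S) \<and> (\<lambda>n. c n j) \<longlonglongrightarrow> b j) \<and>
           (\<forall>\<^sub>F n in sequentially. biorthogonal_in a S (H n) (c n))"
  using assms(1,4)
proof (induction S rule: finite_induct)
  case empty
  show ?case by (auto simp: biorthogonal_in_def)
next
  case (insert m S)
  have "a k \<notin> span (a ` (S - {k}))" if "k \<in> S" for k
    using insert.prems[of k] that span_mono[of "a ` (S - {k})" "a ` (insert m S - {k})"] by auto
  then obtain c b where b: "\<And>j. j \<in> S \<Longrightarrow> b j \<in> span (a ` S)" "\<And>j. j \<in> S \<Longrightarrow> (\<lambda>n. c n j) \<longlonglongrightarrow> b j"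
    and c: "\<forall>\<^sub>F n in sequentially. biorthogonal_in a S (H n) (c n)"
    using insert.IH by blast
  have "a m \<notin> span (a ` S)"
    using insert.prems[of m] insert.hyps(2) by simp
  then obtain e el where el: "el \<in> span (a ` insert m S)" "e \<longlonglongrightarrow> el"
    and e: "\<forall>\<^sub>F n in sequentially. e n \<in> H n \<and> inner (a m) (e n) = 1 \<and> (\<forall>i\<in>S. inner (a i) (e n) = 0)"
    using exists_biorthogonal_extension[OF insert.hyps(1) sub approx _ b c] by blast
  define c' where "c' n j = (if j = m then e n else c n j - inner (a m) (c n j) *\<^sub>R e n)" for n j
  define b' where "b' j = (if j = m then el else b j - inner (a m) (b j) *\<^sub>R el)" for j
  have "span (a ` S) \<subseteq> span (a ` insert m S)"
    by (rule span_mono) auto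
  show ?case
  proof (intro exI[of _ c'] exI[of _ b'] conjI ballI)
    fix j assume "j \<in> insert m S"
    then show "b' j \<in> span (a ` insert m S)"
      unfolding b'_def using el(1) b(1) \<open>span (a ` S) \<subseteq> _\<close>
      by (auto intro!: span_diff span_scale)
    show "(\<lambda>n. c' n j) \<longlonglongrightarrow> b' j"
      unfolding c'_def b'_def using \<open>j \<in> insert m S\<close> b(2) el(2)
      by (cases "j = m") (auto intro!: tendsto_intros)
  next
    show "\<forall>\<^sub>F n in sequentially. biorthogonal_in a (insert m S) (H n) (c' n)"
      using c e
    proof eventually_elim
      case (elim n)
      then show ?case
        using insert.hyps(2) sub
        by (auto simp: biorthogonal_in_def c'_def inner_diff_right subspace_diff subspace_scale)
    qed
  qed
qed

lemma exists_interpolating_approximation: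
  fixes a :: "'i \<Rightarrow> 'a::real_inner"
  assumes "finite S" and sub: "\<And>n. subspace (H n)"
    and y: "\<forall>\<^sub>F n in sequentially. y n \<in> H n" "y \<longlonglongrightarrow> x"
    and b: "\<And>j. j \<in> S \<Longrightarrow> (\<lambda>n. c n j) \<longlonglongrightarrow> b j"
    and c: "\<forall>\<^sub>F n in sequentially. biorthogonal_in a S (H n) (c n)"
  obtains z where "z \<longlonglongrightarrow> x"
    and "\<forall>\<^sub>F n in sequentially. z n \<in> H n \<and> (\<forall>i\<in>S. inner (a i) (z n) = inner (a i) x)"
proof
  define z where "z n = y n + (\<Sum>j\<in>S. (inner (a j) x - inner (a j) (y n)) *\<^sub>R c n j)" for n
  have "(\<lambda>n. \<Sum>j\<in>S. (inner (a j) x - inner (a j) (y n)) *\<^sub>R c n j)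
          \<longlonglongrightarrow> (\<Sum>j\<in>S. (inner (a j) x - inner (a j) x) *\<^sub>R b j)"
    using b by (intro tendsto_intros y(2)) auto
  then show "z \<longlonglongrightarrow> x"
    unfolding z_def using tendsto_add[OF y(2)] by fastforce
  show "\<forall>\<^sub>F n in sequentially. z n \<in> H n \<and> (\<forall>i\<in>S. inner (a i) (z n) = inner (a i) x)"
    using y(1) c
  proof eventually_elim
    case (elim n)
    then show ?case
      unfolding z_def using sub inner_sum_biorthogonal[OF \<open>finite S\<close> _ elim(2)]
      by (auto simp: biorthogonal_in_def inner_add_right intro!: subspace_add subspace_sum subspace_scale)
  qed
qed

lemma adjoint_exists_interpolating_approximation:
  assumes adj: "is_adjoint A As" and "inj_on As l1" and "finite S"
    and sub: "\<And>n. subspace (H n)"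
    and approx: "\<And>x. \<exists>y. (\<forall>\<^sub>F n in sequentially. y n \<in> H n) \<and> y \<longlonglongrightarrow> x"
  obtains v c where "v \<longlonglongrightarrow> x"
    and "\<forall>\<^sub>F n in sequentially. v n \<in> H n \<and> (\<forall>i\<in>S. A (v n) i = A x i) \<and>
           biorthogonal_in (\<lambda>i. As (unit_seq i)) S (H n) (c n)"
proof -
  have "As (unit_seq m) \<notin> span ((\<lambda>i. As (unit_seq i)) ` (S - {m}))" for m
    using adjoint_unit_seq_not_in_span[OF adj \<open>inj_on As l1\<close> \<open>finite S\<close>] .
  then obtain c b where b: "\<And>j. j \<in> S \<Longrightarrow> (\<lambda>n. c n j) \<longlonglongrightarrow> b j"
    and c: "\<forall>\<^sub>F n in sequentially. biorthogonal_in (\<lambda>i. As (unit_seq i)) S (H n) (c n)"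
    using exists_biorthogonal_approximations[OF \<open>finite S\<close> sub approx] by meson
  obtain y where "\<forall>\<^sub>F n in sequentially. y n \<in> H n" "y \<longlonglongrightarrow> x"
    using approx by blast
  then obtain v where "v \<longlonglongrightarrow> x" and v: "\<forall>\<^sub>F n in sequentially. v n \<in> H n \<and>
      (\<forall>i\<in>S. inner (As (unit_seq i)) (v n) = inner (As (unit_seq i)) x)"
    using exists_interpolating_approximation[OF \<open>finite S\<close> sub _ _ b c] by blast
  show thesis
    using that[OF \<open>v \<longlonglongrightarrow> x\<close>] eventually_conj[OF v c] by (simp add: adjoint_unit_seq[OF adj])
qed

section \<open>Dual certificates\<close>

lemma adjoint_eq_if_separating:
  assumes adj: "is_adjoint A As" and "u \<in> l1" and "w \<in> l1"
    and "\<And>k. k \<notin> S \<Longrightarrow> u k = 0" and "\<And>k. k \<notin> S \<Longrightarrow> w k = 0"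
    and "\<forall>z\<in>V. inner (As u) z = inner (As w) z"
    and dual: "\<And>j. j \<in> S \<Longrightarrow> \<exists>c\<in>V. \<forall>i\<in>S. A c i = (if i = j then 1 else 0)"
  shows "u = w"
proof
  fix j
  show "u j = w j"
  proof (cases "j \<in> S")
    case True
    then obtain c where "c \<in> V" and c: "\<And>i. i \<in> S \<Longrightarrow> A c i = (if i = j then 1 else 0)"
      using dual by blast
    have "u j = inner (As u) c"
      using adj \<open>u \<in> l1\<close> suminf_mult_eq_coordinate[OF True _ c, of u] assms(4)
      unfolding is_adjoint_def by simp
    also have "\<dots> = inner (As w) c"
      using assms(6) \<open>c \<in> V\<close> by blast
    also have "\<dots> = w j"
      using adj \<open>w \<in> l1\<close> suminf_mult_eq_coordinate[OF True _ c, of w] assms(5)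
      unfolding is_adjoint_def by simp
    finally show ?thesis .
  qed (simp add: assms(4,5))
qed

(* v certifies that ud is a minimiser; the strict bound off supp ud forces every minimiser to
   vanish there, and on supp ud the vectors c determine its coordinates. *)
lemma l1_min_unique_if_certificate:
  assumes adj: "is_adjoint A As" and "ud \<in> l1" and "v \<in> V"
    and sgn: "\<And>i. i \<in> supp ud \<Longrightarrow> A v i = sgn (ud i)"
    and off: "\<And>i. i \<notin> supp ud \<Longrightarrow> \<bar>A v i\<bar> < 1"
    and dual: "\<And>j. j \<in> supp ud \<Longrightarrow> \<exists>c\<in>V. \<forall>i\<in>supp ud. A c i = (if i = j then 1 else 0)"
  shows "is_l1_min (\<lambda>w. \<forall>z\<in>V. inner (As w) z = inner (As ud) z) u \<longleftrightarrow> u = ud"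
proof -
  let ?feas = "\<lambda>w. \<forall>z\<in>V. inner (As w) z = inner (As ud) z"
  have bd: "\<bar>A v i\<bar> \<le> 1" for i
    using sgn[of i] off[of i] by (cases "i \<in> supp ud") (auto simp: supp_def abs_sgn)
  have pairing: "inner (As w) v = (\<Sum>k. w k * A v k)" if "w \<in> l1" for w
    using adj that unfolding is_adjoint_def by blast
  have lower: "inner (As ud) v \<le> norm1 w" if "w \<in> l1" "?feas w" for w
    using that \<open>v \<in> V\<close> pairing[of w] suminf_mult_le_norm1(2)[OF that(1) bd] by simp
  have "norm1 ud = inner (As ud) v"
    using pairing[OF \<open>ud \<in> l1\<close>] suminf_mult_sgn_eq_norm1[of ud "A v"] sgn
    by (simp add: supp_def)
  then have ud_min: "is_l1_min ?feas ud"
    unfolding is_l1_min_def using \<open>ud \<in> l1\<close> lower by simp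
  have "u = ud" if u: "is_l1_min ?feas u" for u
  proof -
    have "u \<in> l1" "?feas u" "norm1 u \<le> norm1 ud"
      using u ud_min unfolding is_l1_min_def by auto
    then have "(\<Sum>k. u k * A v k) = norm1 u"
      using lower[of u] pairing[of u] \<open>norm1 ud = _\<close> \<open>v \<in> V\<close> suminf_mult_le_norm1(2)[OF _ bd, of u]
      by simp
    then have u0: "u i = 0" if "i \<notin> supp ud" for i
      using suminf_mult_eq_norm1_imp_zero[of u "A v" i] \<open>u \<in> l1\<close> bd off[OF that] by simp
    show "u = ud"
      by (rule adjoint_eq_if_separating[OF adj \<open>u \<in> l1\<close> \<open>ud \<in> l1\<close> u0 _ \<open>?feas u\<close> dual])
        (auto simp: supp_def)
  qed
  then show ?thesis using ud_min by blast
qed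

lemma l1_min_unique_and_certificate_in_subspace:
  assumes adj: "is_adjoint A As" and "ud \<in> l1" and V: "subspace V" "0 < dim V"
    and vd: "\<And>i. \<bar>A vd i\<bar> \<le> 1" "\<And>i. \<bar>A vd i\<bar> = 1 \<longleftrightarrow> i \<in> supp ud"
      "\<And>i. ud i \<noteq> 0 \<Longrightarrow> A vd i = sgn (ud i)" "0 < eps A ud vd"
    and v: "v \<in> V" "\<And>i. i \<in> supp ud \<Longrightarrow> A v i = A vd i" "\<And>i. \<bar>A v i - A vd i\<bar> \<le> eps A ud vd / 2"
    and c: "biorthogonal_in (\<lambda>i. As (unit_seq i)) (supp ud) V c"
  shows "(\<forall>u. is_l1_min (\<lambda>w. orth_proj V (As w) = orth_proj V (As ud)) u \<longleftrightarrow> u = ud) \<and>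
     (\<exists>v\<in>V. (\<forall>i. \<bar>A v i\<bar> \<le> 1) \<and> (\<forall>i. \<bar>A v i\<bar> = 1 \<longleftrightarrow> i \<in> supp ud) \<and>
        eps A ud v \<ge> eps A ud vd / 2)"
proof -
  note pert = eps_perturbation[of A vd ud v, OF vd(1,2) v(2,3) vd(4)]
  have sgn: "A v i = sgn (ud i)" if "i \<in> supp ud" for i
    using v(2)[OF that] vd(3) that by (simp add: supp_def)
  have dual: "\<exists>c\<in>V. \<forall>i\<in>supp ud. A c i = (if i = j then 1 else 0)" if "j \<in> supp ud" for j
    using c that unfolding biorthogonal_in_def adjoint_unit_seq[OF adj] by blast
  have "(\<lambda>w. orth_proj V (As w) = orth_proj V (As ud)) = (\<lambda>w. \<forall>z\<in>V. inner (As w) z = inner (As ud) z)"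
    using orth_proj_eq_iff[OF V] by auto
  then show ?thesis
    using l1_min_unique_if_certificate[OF adj \<open>ud \<in> l1\<close> v(1) sgn pert(1) dual] v(1) pert(2-4)
    by auto
qed

theorem lemma3:
  fixes A :: "'h::{real_inner, complete_space} \<Rightarrow> (nat \<Rightarrow> real)"
    and As :: "(nat \<Rightarrow> real) \<Rightarrow> 'h"
    and Hn :: "nat \<Rightarrow> 'h set"
    and f :: 'h and ud :: "nat \<Rightarrow> real" and vd :: 'h
  assumes A_bl: "bounded_linear_c0 A"
    and adj: "is_adjoint A As"
    and A_inj: "inj A"
    and As_inj: "inj_on As l1"
    and Hn_sub: "\<And>n. subspace (Hn n)"
    and Hn_dim: "\<And>n. dim (Hn n) = n"
    and Pn_conv: "\<And>v. (\<lambda>n. orth_proj (Hn n) v) \<longlonglongrightarrow> v"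
    and ud_l1: "ud \<in> l1"
    and f_eq: "As ud = f"
    and vd_bd: "\<And>i. \<bar>A vd i\<bar> \<le> 1"
    and vd_sign: "\<And>i. ud i \<noteq> 0 \<Longrightarrow> A vd i = sgn (ud i)"
    and vd_supp: "\<And>i. \<bar>A vd i\<bar> = 1 \<longleftrightarrow> i \<in> supp ud"
  shows "\<exists>n0::nat. \<forall>n\<ge>n0.
     (\<forall>u. is_l1_min (\<lambda>w. orth_proj (Hn n) (As w) = orth_proj (Hn n) f) u \<longleftrightarrow> u = ud) \<and>
     (\<exists>v\<in>Hn n. (\<forall>i. \<bar>A v i\<bar> \<le> 1) \<and> (\<forall>i. \<bar>A v i\<bar> = 1 \<longleftrightarrow> i \<in> supp ud) \<and>
        eps A ud v \<ge> eps A ud vd / 2)"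
proof -
  have "A vd \<longlonglongrightarrow> 0"
    using A_bl unfolding bounded_linear_c0_def c0_def by blast
  then have eps_vd: "0 < eps A ud vd"
    using vd_bd vd_supp by (rule eps_pos)
  have "supp ud \<subseteq> {i. 1 \<le> \<bar>A vd i\<bar>}"
    by (auto simp flip: vd_supp)
  then have "finite (supp ud)"
    using c0_finite_abs_ge[OF \<open>A vd \<longlonglongrightarrow> 0\<close>, of 1] finite_subset by auto
  have dim_pos: "\<forall>\<^sub>F n in sequentially. 0 < dim (Hn n)"
    using Hn_dim eventually_gt_at_top[of 0] by simp
  then have "\<exists>y. (\<forall>\<^sub>F n in sequentially. y n \<in> Hn n) \<and> y \<longlonglongrightarrow> x" for x
    using Pn_conv orth_proj_finite_dim(1)[OF Hn_sub]
    by (intro exI[of _ "\<lambda>n. orth_proj (Hn n) x"] conjI) (auto elim: eventually_mono)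
  then obtain v c where "v \<longlonglongrightarrow> vd" and vc: "\<forall>\<^sub>F n in sequentially. v n \<in> Hn n \<and>
      (\<forall>i\<in>supp ud. A (v n) i = A vd i) \<and> biorthogonal_in (\<lambda>i. As (unit_seq i)) (supp ud) (Hn n) (c n)"
    using adjoint_exists_interpolating_approximation[where H = Hn, OF adj As_inj \<open>finite (supp ud)\<close> Hn_sub]
    by blast
  have "\<forall>\<^sub>F n in sequentially. \<forall>i. \<bar>A (v n) i - A vd i\<bar> \<le> eps A ud vd / 2"
    using A_bl \<open>v \<longlonglongrightarrow> vd\<close> by (rule bounded_linear_c0_uniform_tendsto) (use eps_vd in simp)
  then show ?thesis
    using vc dim_pos unfolding eventually_sequentially[symmetric] f_eq[symmetric]
  proof eventually_elim
    case (elim n)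
    then show ?case
      using l1_min_unique_and_certificate_in_subspace[OF adj ud_l1 Hn_sub elim(3) vd_bd vd_supp vd_sign
          eps_vd, of "v n" "c n"]
      by simp
  qed
qed

end
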